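(* Let $\mathsf{A}\in\mathcal{O}(\Omega,\mathcal{H})$ be a POVM and $\mathcal{J}\in\mathrm{Ins}(\Lambda,\mathcal{H},\mathcal{V})$ an instrument. If $\mathsf{A}$ does not disturb $\mathcal{J}$, then $\mathsf{A}$ and $\mathcal{J}$ are compatible. Furthermore, if $\mathsf{A}$ is sharp, then the converse also holds: if $\mathsf{A}$ and $\mathcal{J}$ are compatible then $\mathsf{A}$ does not disturb $\mathcal{J}$.
   Context: All Hilbert spaces are finite-dimensional and complex, and all outcome sets are finite. A POVM $\mathsf{A}\in\mathcal{O}(\Omega,\mathcal{H})$ is a map $x\mapsto \mathsf{A}(x)$ from $\Omega$ to positive operators on $\mathcal{H}$ with $\sum_x \mathsf{A}(x)=I$; it is sharp if $\mathsf{A}(x)^2=\mathsf{A}(x)$ for all $x$. An instrument $\mathcal{I}\in\mathrm{Ins}(\Omega,\mathcal{H},\mathcal{K})$ is a family $(\mathcal{I}_x)_{x\in\Omega}$ of completely positive trace-nonincreasing linear maps $\mathcal{L}(\mathcal{H})\to\mathcal{L}(\mathcal{K})$ such that $\Phi^{\mathcal{I}}:=\sum_x\mathcal{I}_x$ is trace preserving; its induced POVM $\mathsf{A}^{\mathcal{I}}$ is defined by $\mathrm{tr}[\mathsf{A}^{\mathcal{I}}(x)\varrho]=\mathrm{tr}[\mathcal{I}_x(\varrho)]$; $\mathrm{Ins}(\Omega,\mathcal{H}):=\mathrm{Ins}(\Omega,\mathcal{H},\mathcal{H})$. An instrument $\mathcal{I}\in\mathrm{Ins}(\Omega,\mathcal{H})$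 does not disturb $\mathcal{J}\in\mathrm{Ins}(\Lambda,\mathcal{H},\mathcal{V})$ if $\mathcal{J}_y\circ\Phi^{\mathcal{I}}=\mathcal{J}_y$ for all $y\in\Lambda$. A POVM $\mathsf{A}\in\mathcal{O}(\Omega,\mathcal{H})$ does not disturb $\mathcal{J}$ if there exists $\mathcal{I}\in\mathrm{Ins}(\Omega,\mathcal{H})$ with $\mathsf{A}^{\mathcal{I}}=\mathsf{A}$ that does not disturb $\mathcal{J}$. A POVM $\mathsf{A}\in\mathcal{O}(\Omega,\mathcal{H})$ and an instrument $\mathcal{J}\in\mathrm{Ins}(\Lambda,\mathcal{H},\mathcal{V})$ are compatible if there exists $\mathcal{G}\in\mathrm{Ins}(\Omega\times\Lambda,\mathcal{H},\mathcal{V})$ with $\sum_{x}\mathcal{G}_{(x,y)}=\mathcal{J}_y$ for all $y$ and $\sum_y\mathsf{A}^{\mathcal{G}}(x,y)=\mathsf{A}(x)$ for all $x$. *)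

theory Defs
  imports "Jordan_Normal_Form.Matrix"
begin

text \<open>Operators on a Hilbert space of dimension n are complex n x n matrices
  (elements of carrier_mat n n).  Superoperators L(H) -> L(K) are HOL functions on
  matrices; only their behaviour on carrier_mat n n matters.\<close>

definition mtrace :: "complex mat \<Rightarrow> complex" where
  "mtrace A = (\<Sum>i<dim_row A. A $$ (i, i))"

definition psd :: "nat \<Rightarrow> complex mat \<Rightarrow> bool" where
  "psd n A \<longleftrightarrow> A \<in> carrier_mat n n \<and>
     (\<forall>v \<in> carrier_vec n. let q = conjugate v \<bullet> (A *\<^sub>v v) in Im q = 0 \<and> Re q \<ge> 0)"

definition msum :: "nat \<Rightarrow> nat \<Rightarrow> ('i \<Rightarrow> complex mat) \<Rightarrow> 'i set \<Rightarrow> complex mat" where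
  "msum r c f S = mat r c (\<lambda>(i, j). \<Sum>x\<in>S. f x $$ (i, j))"

definition is_povm :: "nat \<Rightarrow> ('x::finite \<Rightarrow> complex mat) \<Rightarrow> bool" where
  "is_povm n A \<longleftrightarrow> (\<forall>x. psd n (A x)) \<and> msum n n A UNIV = 1\<^sub>m n"

definition sharp :: "nat \<Rightarrow> ('x::finite \<Rightarrow> complex mat) \<Rightarrow> bool" where
  "sharp n A \<longleftrightarrow> (\<forall>x. A x * A x = A x)"

definition lin_map :: "nat \<Rightarrow> nat \<Rightarrow> (complex mat \<Rightarrow> complex mat) \<Rightarrow> bool" where
  "lin_map n k \<Phi> \<longleftrightarrow>
     (\<forall>A \<in> carrier_mat n n. \<Phi> A \<in> carrier_mat k k) \<and>
     (\<forall>A \<in> carrier_mat n n. \<forall>B \<in> carrier_mat n n. \<Phi> (A + B) = \<Phi> A + \<Phi> B) \<and>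
     (\<forall>A \<in> carrier_mat n n. \<forall>c. \<Phi> (c \<cdot>\<^sub>m A) = c \<cdot>\<^sub>m \<Phi> A)"

text \<open>The ampliation id_r (x) Phi acting on L(C^r (x) C^n) = (r*n) x (r*n) block matrices,
  applying Phi to each n x n block.\<close>
definition ampl :: "nat \<Rightarrow> nat \<Rightarrow> nat \<Rightarrow> (complex mat \<Rightarrow> complex mat) \<Rightarrow> complex mat \<Rightarrow> complex mat" where
  "ampl r n k \<Phi> X = mat (r * k) (r * k) (\<lambda>(i, j).
      \<Phi> (mat n n (\<lambda>(a, b). X $$ ((i div k) * n + a, (j div k) * n + b))) $$ (i mod k, j mod k))"

definition completely_positive :: "nat \<Rightarrow> nat \<Rightarrow> (complex mat \<Rightarrow> complex mat) \<Rightarrow> bool" where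
  "completely_positive n k \<Phi> \<longleftrightarrow>
     (\<forall>r. \<forall>X. psd (r * n) X \<longrightarrow> psd (r * k) (ampl r n k \<Phi> X))"

definition trace_nonincreasing :: "nat \<Rightarrow> (complex mat \<Rightarrow> complex mat) \<Rightarrow> bool" where
  "trace_nonincreasing n \<Phi> \<longleftrightarrow> (\<forall>\<rho>. psd n \<rho> \<longrightarrow> Re (mtrace (\<Phi> \<rho>)) \<le> Re (mtrace \<rho>))"

definition trace_preserving :: "nat \<Rightarrow> (complex mat \<Rightarrow> complex mat) \<Rightarrow> bool" where
  "trace_preserving n \<Phi> \<longleftrightarrow> (\<forall>\<rho> \<in> carrier_mat n n. mtrace (\<Phi> \<rho>) = mtrace \<rho>)"

definition chan :: "nat \<Rightarrow> ('x::finite \<Rightarrow> complex mat \<Rightarrow> complex mat) \<Rightarrow> complex mat \<Rightarrow> complex mat" where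
  "chan k I \<rho> = msum k k (\<lambda>x. I x \<rho>) UNIV"

definition is_instrument :: "nat \<Rightarrow> nat \<Rightarrow> ('x::finite \<Rightarrow> complex mat \<Rightarrow> complex mat) \<Rightarrow> bool" where
  "is_instrument n k I \<longleftrightarrow>
     (\<forall>x. lin_map n k (I x) \<and> completely_positive n k (I x) \<and> trace_nonincreasing n (I x))
     \<and> trace_preserving n (chan k I)"

definition induced_povm :: "nat \<Rightarrow> ('x::finite \<Rightarrow> complex mat \<Rightarrow> complex mat) \<Rightarrow> ('x \<Rightarrow> complex mat) \<Rightarrow> bool" where
  "induced_povm n I B \<longleftrightarrow>
     (\<forall>x. B x \<in> carrier_mat n n \<and> (\<forall>\<rho> \<in> carrier_mat n n. mtrace (B x * \<rho>) = mtrace (I x \<rho>)))"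

definition ins_not_disturb :: "nat \<Rightarrow> nat \<Rightarrow> ('x::finite \<Rightarrow> complex mat \<Rightarrow> complex mat)
     \<Rightarrow> ('y::finite \<Rightarrow> complex mat \<Rightarrow> complex mat) \<Rightarrow> bool" where
  "ins_not_disturb n d I J \<longleftrightarrow> (\<forall>y. \<forall>\<rho> \<in> carrier_mat n n. J y (chan n I \<rho>) = J y \<rho>)"

definition povm_not_disturb :: "nat \<Rightarrow> nat \<Rightarrow> ('x::finite \<Rightarrow> complex mat)
     \<Rightarrow> ('y::finite \<Rightarrow> complex mat \<Rightarrow> complex mat) \<Rightarrow> bool" where
  "povm_not_disturb n d A J \<longleftrightarrow>
     (\<exists>I :: 'x \<Rightarrow> complex mat \<Rightarrow> complex mat.
        is_instrument n n I \<and> induced_povm n I A \<and> ins_not_disturb n d I J)"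

definition compatible :: "nat \<Rightarrow> nat \<Rightarrow> ('x::finite \<Rightarrow> complex mat)
     \<Rightarrow> ('y::finite \<Rightarrow> complex mat \<Rightarrow> complex mat) \<Rightarrow> bool" where
  "compatible n d A J \<longleftrightarrow>
     (\<exists>G :: 'x \<times> 'y \<Rightarrow> complex mat \<Rightarrow> complex mat. \<exists>B :: 'x \<times> 'y \<Rightarrow> complex mat.
        is_instrument n d G \<and> induced_povm n G B \<and>
        (\<forall>y. \<forall>\<rho> \<in> carrier_mat n n. msum d d (\<lambda>x. G (x, y) \<rho>) UNIV = J y \<rho>) \<and>
        (\<forall>x. msum n n (\<lambda>y. B (x, y)) UNIV = A x))"

end

theory Submission
  imports Defs
begin

(* If an instrument I with induced POVM A leaves J undisturbed, first applying I and then J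
   gives the joint instrument G (x, y) = J y o I x: summing over x yields J y o Phi^I = J y,
   and summing the induced effects over y yields A, because sum_y J y is trace preserving.

   Conversely let A be sharp and G a joint instrument. Each G (x, y) is a positive map whose
   trace is dominated by rho |-> tr (A x * rho). Such a map kills |a><b| and |b><a| whenever
   b lies in the kernel of the projection A x, hence G (x, y) rho = G (x, y) (A x rho A x).
   The A x are mutually orthogonal projections, so the Lueders instrument rho |-> A x rho A x
   induces A and does not disturb J y = sum_x G (x, y). *)

definition sesq :: "nat \<Rightarrow> complex mat \<Rightarrow> (nat \<Rightarrow> complex) \<Rightarrow> (nat \<Rightarrow> complex) \<Rightarrow> complex" where
  "sesq n M f g = (\<Sum>i<n. \<Sum>j<n. cnj (f i) * M $$ (i, j) * g j)"

definition unit_fun :: "nat \<Rightarrow> nat \<Rightarrow> complex" where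
  "unit_fun a = (\<lambda>i. if i = a then 1 else 0)"

definition mat_apply :: "nat \<Rightarrow> complex mat \<Rightarrow> (nat \<Rightarrow> complex) \<Rightarrow> nat \<Rightarrow> complex" where
  "mat_apply n C g = (\<lambda>i. \<Sum>j<n. C $$ (i, j) * g j)"

definition hermitian :: "nat \<Rightarrow> complex mat \<Rightarrow> bool" where
  "hermitian n M \<longleftrightarrow> (\<forall>i<n. \<forall>j<n. M $$ (j, i) = cnj (M $$ (i, j)))"

definition outer :: "nat \<Rightarrow> (nat \<Rightarrow> complex) \<Rightarrow> (nat \<Rightarrow> complex) \<Rightarrow> complex mat" where
  "outer n u w = mat n n (\<lambda>(i, j). u i * cnj (w j))"

definition mat_unit :: "nat \<Rightarrow> nat \<Rightarrow> nat \<Rightarrow> complex mat" where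
  "mat_unit n a b = outer n (unit_fun a) (unit_fun b)"

definition block_diag :: "nat \<Rightarrow> nat \<Rightarrow> complex mat \<Rightarrow> complex mat" where
  "block_diag r n A = mat (r * n) (r * n) (\<lambda>(i, j). if i div n = j div n then A $$ (i mod n, j mod n) else 0)"

lemma index_mult_mat_sum:
  assumes "A \<in> carrier_mat n m" "B \<in> carrier_mat m p" "i < n" "j < p"
  shows "(A * B) $$ (i, j) = (\<Sum>k<m. A $$ (i, k) * B $$ (k, j))"
  using assms by (simp add: scalar_prod_def lessThan_atLeast0)

lemma index_mult3_mat_sum:
  assumes "A \<in> carrier_mat m m'" "B \<in> carrier_mat m' p'" "C \<in> carrier_mat p' p" "i < m" "j < p"
  shows "(A * B * C) $$ (i, j) = (\<Sum>l<p'. (\<Sum>k<m'. A $$ (i, k) * B $$ (k, l)) * C $$ (l, j))"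
proof -
  have "(A * B * C) $$ (i, j) = (\<Sum>l<p'. (A * B) $$ (i, l) * C $$ (l, j))"
    by (rule index_mult_mat_sum) (use assms in auto)
  also have "\<dots> = (\<Sum>l<p'. (\<Sum>k<m'. A $$ (i, k) * B $$ (k, l)) * C $$ (l, j))"
    using assms by (auto simp: scalar_prod_def lessThan_atLeast0 intro!: sum.cong)
  finally show ?thesis .
qed

subsection \<open>Sesquilinear forms and positive semidefinite matrices\<close>

lemma sesq_vec:
  assumes "M \<in> carrier_mat n n" "v \<in> carrier_vec n"
  shows "conjugate v \<bullet> (M *\<^sub>v v) = sesq n M (\<lambda>i. v $ i) (\<lambda>i. v $ i)"
  using assms by (simp add: sesq_def scalar_prod_def lessThan_atLeast0 sum_distrib_left mult.assoc)

lemma psd_iff_sesq: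
  "psd n M \<longleftrightarrow> M \<in> carrier_mat n n \<and> (\<forall>f. Im (sesq n M f f) = 0 \<and> 0 \<le> Re (sesq n M f f))"
proof
  assume p: "psd n M"
  hence M: "M \<in> carrier_mat n n" by (simp add: psd_def)
  have "Im (sesq n M f f) = 0 \<and> 0 \<le> Re (sesq n M f f)" for f
  proof -
    have "sesq n M f f = sesq n M (\<lambda>i. vec n f $ i) (\<lambda>i. vec n f $ i)"
      by (simp add: sesq_def)
    then show ?thesis using p sesq_vec[OF M, of "vec n f"] unfolding psd_def Let_def
      by (metis vec_carrier)
  qed
  thus "M \<in> carrier_mat n n \<and> (\<forall>f. Im (sesq n M f f) = 0 \<and> 0 \<le> Re (sesq n M f f))" using M by auto
next
  assume "M \<in> carrier_mat n n \<and> (\<forall>f. Im (sesq n M f f) = 0 \<and> 0 \<le> Re (sesq n M f f))"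
  thus "psd n M" by (auto simp: psd_def Let_def sesq_vec)
qed

lemma sesq_unit_fun:
  assumes "a < n" "b < n"
  shows "sesq n M (unit_fun a) (unit_fun b) = M $$ (a, b)"
proof -
  have "sesq n M (unit_fun a) (unit_fun b)
      = (\<Sum>i<n. \<Sum>j<n. if j = b then (if i = a then M $$ (i, j) else 0) else 0)"
    unfolding sesq_def unit_fun_def by (intro sum.cong refl) auto
  also have "\<dots> = (\<Sum>i<n. if i = a then M $$ (i, b) else 0)"
    using assms by (intro sum.cong refl) (simp add: sum.delta)
  also have "\<dots> = M $$ (a, b)" using assms by (simp add: sum.delta)
  finally show ?thesis .
qed

lemma sesq_expand:
  "sesq n M (\<lambda>i. u i + t * w i) (\<lambda>i. u i + t * w i)
     = sesq n M u u + t * sesq n M u w + cnj t * sesq n M w u + cnj t * t * sesq n M w w"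
  by (simp add: sesq_def algebra_simps sum.distrib sum_distrib_left)

lemma sesq_add_mat:
  "A \<in> carrier_mat n n \<Longrightarrow> B \<in> carrier_mat n n \<Longrightarrow> sesq n (A + B) f g = sesq n A f g + sesq n B f g"
  by (simp add: sesq_def algebra_simps sum.distrib)

lemma sesq_smult_mat: "A \<in> carrier_mat n n \<Longrightarrow> sesq n (c \<cdot>\<^sub>m A) f g = c * sesq n A f g"
  by (simp add: sesq_def algebra_simps sum_distrib_left)

lemma sesq_mat_apply: "sesq n M f g = (\<Sum>i<n. cnj (f i) * mat_apply n M g i)"
  by (simp add: sesq_def mat_apply_def sum_distrib_left mult.assoc)

lemma affine_nonneg_slope_zero:
  fixes a s :: real
  assumes "\<forall>k. 0 \<le> a + k * s"
  shows "s = 0"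
proof (rule ccontr)
  assume "s \<noteq> 0"
  have "0 \<le> a + (- (\<bar>a\<bar> + 1) / s) * s" using assms by blast
  also have "\<dots> = a - (\<bar>a\<bar> + 1)" using \<open>s \<noteq> 0\<close> by (simp add: field_simps)
  finally show False by linarith
qed

lemma nonneg_perturbation_coeffs_zero:
  fixes q c1 c2 :: complex
  assumes "\<forall>t. Im (q + cnj t * c1 + t * c2) = 0 \<and> 0 \<le> Re (q + cnj t * c1 + t * c2)"
  shows "c1 = 0 \<and> c2 = 0"
proof -
  have i0: "Im q = 0" using assms[rule_format, of 0] by simp
  have i1: "Im c1 + Im c2 = 0" using assms[rule_format, of 1] i0 by simp
  have i2: "Re c2 - Re c1 = 0" using assms[rule_format, of "\<i>"] i0 by simp
  have "\<forall>k. 0 \<le> Re q + k * (Re c1 + Re c2)"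
    using assms[rule_format, of "complex_of_real _"] by (simp add: algebra_simps)
  hence r1: "Re c1 + Re c2 = 0" by (rule affine_nonneg_slope_zero)
  have "\<forall>k. 0 \<le> Re q + k * (Im c1 - Im c2)"
    using assms[rule_format, of "\<i> * complex_of_real _"] by (simp add: algebra_simps)
  hence r2: "Im c1 - Im c2 = 0" by (rule affine_nonneg_slope_zero)
  show ?thesis using i1 i2 r1 r2 by (simp add: complex_eq_iff)
qed

lemma psd_sesq_null:
  assumes "psd n M" "sesq n M w w = 0"
  shows "sesq n M u w = 0 \<and> sesq n M w u = 0"
proof -
  have "\<forall>t. Im (sesq n M u u + cnj t * sesq n M w u + t * sesq n M u w) = 0 \<and>
            0 \<le> Re (sesq n M u u + cnj t * sesq n M w u + t * sesq n M u w)"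
  proof
    fix t
    have "sesq n M (\<lambda>i. u i + t * w i) (\<lambda>i. u i + t * w i)
        = sesq n M u u + cnj t * sesq n M w u + t * sesq n M u w"
      using assms(2) by (simp add: sesq_expand algebra_simps)
    thus "Im (sesq n M u u + cnj t * sesq n M w u + t * sesq n M u w) = 0 \<and>
          0 \<le> Re (sesq n M u u + cnj t * sesq n M w u + t * sesq n M u w)"
      using assms(1) unfolding psd_iff_sesq by metis
  qed
  from nonneg_perturbation_coeffs_zero[OF this] show ?thesis by simp
qed

lemma psd_diag:
  "psd n M \<Longrightarrow> i < n \<Longrightarrow> Im (M $$ (i, i)) = 0 \<and> 0 \<le> Re (M $$ (i, i))"
  by (metis psd_iff_sesq sesq_unit_fun)

lemma psd_hermitian:
  assumes "psd n M"
  shows "hermitian n M"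
  unfolding hermitian_def
proof (intro allI impI)
  fix i j assume ij: "i < n" "j < n"
  let ?a = "M $$ (i, j)" and ?b = "M $$ (j, i)"
  have im: "Im (sesq n M f f) = 0" for f using assms psd_iff_sesq by blast
  have key: "Im (t * ?a + cnj t * ?b) = 0" for t
  proof -
    have "sesq n M (\<lambda>k. unit_fun i k + t * unit_fun j k) (\<lambda>k. unit_fun i k + t * unit_fun j k)
        = M $$ (i, i) + t * ?a + cnj t * ?b + cnj t * t * M $$ (j, j)"
      using ij by (simp add: sesq_expand sesq_unit_fun)
    moreover have "cnj t * t = complex_of_real ((Re t)\<^sup>2 + (Im t)\<^sup>2)"
      by (simp add: complex_eq_iff power2_eq_square)
    moreover have "Im (M $$ (i, i)) = 0" "Im (M $$ (j, j)) = 0"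
      using psd_diag[OF assms] ij by auto
    ultimately show ?thesis using im[of "\<lambda>k. unit_fun i k + t * unit_fun j k"] by simp
  qed
  have "Im ?a + Im ?b = 0" using key[of 1] by simp
  moreover have "Re ?a - Re ?b = 0" using key[of "\<i>"] by simp
  ultimately show "?b = cnj ?a" by (simp add: complex_eq_iff)
qed

lemma hermitianD: "hermitian n C \<Longrightarrow> i < n \<Longrightarrow> j < n \<Longrightarrow> cnj (C $$ (i, j)) = C $$ (j, i)"
  unfolding hermitian_def by metis

lemma psd_zero_diag_imp_zero:
  assumes "psd n M" "\<forall>i<n. M $$ (i, i) = 0"
  shows "M = 0\<^sub>m n n"
proof (rule eq_matI)
  fix i j assume "i < dim_row (0\<^sub>m n n :: complex mat)" "j < dim_col (0\<^sub>m n n :: complex mat)"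
  hence ij: "i < n" "j < n" by auto
  have "sesq n M (unit_fun j) (unit_fun j) = 0" using ij assms(2) by (simp add: sesq_unit_fun)
  from psd_sesq_null[OF assms(1) this, of "unit_fun i"] ij show "M $$ (i, j) = 0\<^sub>m n n $$ (i, j)"
    by (simp add: sesq_unit_fun)
qed (use assms(1) in \<open>auto simp: psd_def\<close>)

lemma sesq_zero_imp_zero:
  assumes "M \<in> carrier_mat n n" "\<forall>f. sesq n M f f = 0"
  shows "M = 0\<^sub>m n n"
proof (rule psd_zero_diag_imp_zero)
  show "psd n M" using assms by (simp add: psd_iff_sesq)
  show "\<forall>i<n. M $$ (i, i) = 0" using assms(2) by (metis sesq_unit_fun)
qed

lemma mtrace_carrier: "M \<in> carrier_mat n n \<Longrightarrow> mtrace M = (\<Sum>i<n. M $$ (i, i))"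
  by (simp add: mtrace_def)

lemma psd_trace_nonneg:
  assumes "psd n M"
  shows "Im (mtrace M) = 0 \<and> 0 \<le> Re (mtrace M)"
proof -
  have "M \<in> carrier_mat n n" using assms psd_def by auto
  then show ?thesis using psd_diag[OF assms] by (auto simp: mtrace_carrier intro!: sum_nonneg)
qed

lemma psd_trace_zero_imp_zero:
  assumes "psd n M" "mtrace M = 0"
  shows "M = 0\<^sub>m n n"
proof -
  have M: "M \<in> carrier_mat n n" using assms psd_def by auto
  have "(\<Sum>i<n. Re (M $$ (i, i))) = 0" using assms(2) mtrace_carrier[OF M]
    by (metis Re_sum zero_complex.simps(1))
  hence "\<forall>i\<in>{..<n}. Re (M $$ (i, i)) = 0"
    using psd_diag[OF assms(1)] by (subst sum_nonneg_eq_0_iff[symmetric]) auto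
  hence "\<forall>i<n. M $$ (i, i) = 0" using psd_diag[OF assms(1)] by (simp add: complex_eq_iff)
  thus ?thesis using psd_zero_diag_imp_zero[OF assms(1)] by blast
qed

lemma outer_carrier[simp]: "outer n u w \<in> carrier_mat n n"
  and outer_dims[simp]: "dim_row (outer n u w) = n" "dim_col (outer n u w) = n"
  by (simp_all add: outer_def)

lemma mat_unit_carrier[simp]: "mat_unit n a b \<in> carrier_mat n n"
  and mat_unit_dims[simp]: "dim_row (mat_unit n a b) = n" "dim_col (mat_unit n a b) = n"
  by (simp_all add: mat_unit_def)

lemma mat_unit_index:
  "i < n \<Longrightarrow> j < n \<Longrightarrow> mat_unit n a b $$ (i, j) = (if i = a \<and> j = b then 1 else 0)"
  by (simp add: mat_unit_def outer_def unit_fun_def)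

lemma outer_psd: "psd n (outer n u u)"
proof -
  have "sesq n (outer n u u) f f = (\<Sum>i<n. cnj (f i) * u i) * cnj (\<Sum>i<n. cnj (f i) * u i)" for f
    unfolding sesq_def outer_def
    by (simp add: cnj_sum sum_distrib_left sum_distrib_right mult.assoc mult.left_commute mult.commute)
  moreover have "Im (c * cnj c) = 0 \<and> 0 \<le> Re (c * cnj c)" for c :: complex
    by simp
  ultimately show ?thesis unfolding psd_iff_sesq by (metis outer_carrier)
qed

lemma outer_expand:
  "outer n (\<lambda>i. a i + t * b i) (\<lambda>i. a i + t * b i) =
     outer n a a + cnj t \<cdot>\<^sub>m outer n a b + t \<cdot>\<^sub>m outer n b a + (t * cnj t) \<cdot>\<^sub>m outer n b b"
  by (rule eq_matI) (auto simp: outer_def algebra_simps)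

lemma sesq_mult_right:
  assumes "M \<in> carrier_mat m m" "C \<in> carrier_mat m m"
  shows "sesq m (M * C) f g = sesq m M f (mat_apply m C g)"
proof -
  have "sesq m (M * C) f g = (\<Sum>i<m. \<Sum>j<m. \<Sum>l<m. cnj (f i) * M $$ (i, l) * C $$ (l, j) * g j)"
    unfolding sesq_def using assms
    by (intro sum.cong refl)
       (simp add: scalar_prod_def lessThan_atLeast0 sum_distrib_left sum_distrib_right mult.assoc)
  also have "\<dots> = (\<Sum>i<m. \<Sum>l<m. \<Sum>j<m. cnj (f i) * M $$ (i, l) * C $$ (l, j) * g j)"
    by (rule sum.cong[OF refl], rule sum.swap)
  also have "\<dots> = sesq m M f (mat_apply m C g)"
    unfolding sesq_def mat_apply_def by (simp add: sum_distrib_left mult.assoc)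
  finally show ?thesis .
qed

lemma sesq_mult_left:
  assumes "M \<in> carrier_mat m m" "C \<in> carrier_mat m m" "hermitian m C"
  shows "sesq m (C * M) f g = sesq m M (mat_apply m C f) g"
proof -
  have "sesq m (C * M) f g = (\<Sum>i<m. \<Sum>j<m. \<Sum>k<m. cnj (f i) * C $$ (i, k) * M $$ (k, j) * g j)"
    unfolding sesq_def using assms
    by (intro sum.cong refl)
       (simp add: scalar_prod_def lessThan_atLeast0 sum_distrib_left sum_distrib_right mult.assoc)
  also have "\<dots> = (\<Sum>i<m. \<Sum>k<m. \<Sum>j<m. cnj (f i) * C $$ (i, k) * M $$ (k, j) * g j)"
    by (rule sum.cong[OF refl], rule sum.swap)
  also have "\<dots> = (\<Sum>k<m. \<Sum>i<m. \<Sum>j<m. cnj (f i) * C $$ (i, k) * M $$ (k, j) * g j)"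
    by (rule sum.swap)
  also have "\<dots> = (\<Sum>k<m. \<Sum>i<m. \<Sum>j<m. cnj (C $$ (k, i) * f i) * M $$ (k, j) * g j)"
  proof -
    have h: "cnj (C $$ (k, i) * f i) = cnj (f i) * C $$ (i, k)" if "i < m" "k < m" for i k
      using hermitianD[OF assms(3) that(2,1)] by simp
    show ?thesis by (intro sum.cong refl) (simp only: h lessThan_iff)
  qed
  also have "\<dots> = (\<Sum>k<m. \<Sum>j<m. \<Sum>i<m. cnj (C $$ (k, i) * f i) * M $$ (k, j) * g j)"
    by (rule sum.cong[OF refl], rule sum.swap)
  also have "\<dots> = sesq m M (mat_apply m C f) g"
    unfolding sesq_def mat_apply_def by (simp only: cnj_sum sum_distrib_right)
  finally show ?thesis .
qed

lemma psd_sandwich: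
  assumes "psd m X" "C \<in> carrier_mat m m" "hermitian m C"
  shows "psd m (C * X * C)"
proof -
  have X: "X \<in> carrier_mat m m" using assms(1) psd_def by auto
  have CX: "C * X \<in> carrier_mat m m" using X assms(2) by simp
  have "sesq m (C * X * C) f f = sesq m X (mat_apply m C f) (mat_apply m C f)" for f
    using sesq_mult_right[OF CX assms(2)] sesq_mult_left[OF X assms(2,3)] by simp
  moreover have "C * X * C \<in> carrier_mat m m" using CX assms(2) by simp
  ultimately show ?thesis using assms(1) unfolding psd_iff_sesq by metis
qed

lemma hermitian_mult_index_cnj:
  assumes "hermitian n X" "hermitian n Y" "X \<in> carrier_mat n n" "Y \<in> carrier_mat n n" "j < n" "k < n"
  shows "(X * Y) $$ (j, k) = cnj ((Y * X) $$ (k, j))"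
proof -
  have "(X * Y) $$ (j, k) = (\<Sum>l<n. X $$ (j, l) * Y $$ (l, k))"
    by (rule index_mult_mat_sum) (use assms in auto)
  also have "\<dots> = cnj (\<Sum>l<n. Y $$ (k, l) * X $$ (l, j))"
    unfolding cnj_sum using hermitianD[OF assms(1)] hermitianD[OF assms(2)] assms(5,6)
    by (intro sum.cong refl) (simp add: mult.commute)
  also have "(\<Sum>l<n. Y $$ (k, l) * X $$ (l, j)) = (Y * X) $$ (k, j)"
    by (rule index_mult_mat_sum[symmetric]) (use assms in auto)
  finally show ?thesis .
qed

lemma sum_cnj_mult_self_zero:
  fixes w :: "nat \<Rightarrow> complex"
  assumes "(\<Sum>k<n. cnj (w k) * w k) = 0" "k < n"
  shows "w k = 0"
proof -
  have e: "cnj (w k) * w k = complex_of_real ((Re (w k))\<^sup>2 + (Im (w k))\<^sup>2)" for k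
    by (simp add: complex_eq_iff power2_eq_square)
  have "complex_of_real (\<Sum>k<n. (Re (w k))\<^sup>2 + (Im (w k))\<^sup>2) = 0"
    using assms(1) unfolding e of_real_sum .
  hence "(\<Sum>k<n. (Re (w k))\<^sup>2 + (Im (w k))\<^sup>2) = 0" by (simp only: of_real_eq_0_iff)
  hence "(Re (w k))\<^sup>2 + (Im (w k))\<^sup>2 = 0"
    using assms(2) by (subst (asm) sum_nonneg_eq_0_iff) auto
  thus ?thesis by (simp add: complex_eq_iff sum_power2_eq_zero_iff)
qed

lemma sandwich_zero_imp_mult_zero:
  assumes P: "P \<in> carrier_mat n n" "hermitian n P"
    and Q: "Q \<in> carrier_mat n n" "hermitian n Q" "Q * Q = Q"
    and PQP: "P * Q * P = 0\<^sub>m n n"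
  shows "P * Q = 0\<^sub>m n n"
proof -
  have "P * Q * P = P * (Q * Q * P)" using P(1) Q(1) Q(3) by (simp add: assoc_mult_mat[of P n n Q n P n])
  also have "\<dots> = (P * Q) * (Q * P)" using P(1) Q(1) by (simp add: assoc_mult_mat[of _ n n _ n _ n])
  finally have prod0: "(P * Q) * (Q * P) = 0\<^sub>m n n" using PQP by simp
  have QP: "(Q * P) $$ (k, j) = 0" if jk: "j < n" "k < n" for j k
  proof -
    have "0 = ((P * Q) * (Q * P)) $$ (j, j)" using prod0 jk by simp
    also have "\<dots> = (\<Sum>l<n. (P * Q) $$ (j, l) * (Q * P) $$ (l, j))"
      using jk P Q by (intro index_mult_mat_sum) auto
    also have "\<dots> = (\<Sum>l<n. cnj ((Q * P) $$ (l, j)) * (Q * P) $$ (l, j))"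
      using hermitian_mult_index_cnj[OF P(2) Q(2) P(1) Q(1)] jk by (intro sum.cong refl) simp
    finally show ?thesis using sum_cnj_mult_self_zero[of "\<lambda>l. (Q * P) $$ (l, j)" n k] jk by simp
  qed
  show ?thesis
  proof (rule eq_matI)
    fix j k assume "j < dim_row (0\<^sub>m n n :: complex mat)" "k < dim_col (0\<^sub>m n n :: complex mat)"
    hence jk: "j < n" "k < n" by auto
    then show "(P * Q) $$ (j, k) = 0\<^sub>m n n $$ (j, k)"
      using hermitian_mult_index_cnj[OF P(2) Q(2) P(1) Q(1) jk] QP[OF jk] by simp
  qed (use P Q in auto)
qed

lemma linear_functional_vanishes:
  fixes \<psi> :: "complex mat \<Rightarrow> complex"
  assumes add: "\<And>A B. A \<in> carrier_mat n n \<Longrightarrow> B \<in> carrier_mat n n \<Longrightarrow> \<psi> (A + B) = \<psi> A + \<psi> B"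
    and smult: "\<And>A c. A \<in> carrier_mat n n \<Longrightarrow> \<psi> (c \<cdot>\<^sub>m A) = c * \<psi> A"
    and units: "\<And>a b. a < n \<Longrightarrow> b < n \<Longrightarrow> \<psi> (mat_unit n a b) = 0"
    and \<rho>: "\<rho> \<in> carrier_mat n n"
  shows "\<psi> \<rho> = 0"
proof -
  define part where "part S = mat n n (\<lambda>(i, j). if (i, j) \<in> S then \<rho> $$ (i, j) else 0)" for S
  have part_carrier: "part S \<in> carrier_mat n n" for S by (simp add: part_def)
  have "finite S \<Longrightarrow> S \<subseteq> {..<n} \<times> {..<n} \<Longrightarrow> \<psi> (part S) = 0" for S
  proof (induction S rule: finite_induct)
    case empty
    have "part {} = 0 \<cdot>\<^sub>m (0\<^sub>m n n)" by (auto simp: part_def)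
    then show ?case using smult[of "0\<^sub>m n n" 0] by simp
  next
    case (insert p S)
    obtain a b where p: "p = (a, b)" by force
    have "part (insert p S) = part S + \<rho> $$ (a, b) \<cdot>\<^sub>m mat_unit n a b"
      by (rule eq_matI) (use insert p in \<open>auto simp: part_def mat_unit_index\<close>)
    then show ?case using insert p add smult units part_carrier by simp
  qed
  moreover have "part ({..<n} \<times> {..<n}) = \<rho>"
    by (rule eq_matI) (use \<rho> in \<open>auto simp: part_def\<close>)
  ultimately show ?thesis by (metis finite_SigmaI finite_lessThan order_refl)
qed

lemma lin_mapD:
  assumes "lin_map n k \<Phi>"
  shows "\<And>A. A \<in> carrier_mat n n \<Longrightarrow> \<Phi> A \<in> carrier_mat k k"
    and "\<And>A B. A \<in> carrier_mat n n \<Longrightarrow> B \<in> carrier_mat n n \<Longrightarrow> \<Phi> (A + B) = \<Phi> A + \<Phi> B"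
    and "\<And>A c. A \<in> carrier_mat n n \<Longrightarrow> \<Phi> (c \<cdot>\<^sub>m A) = c \<cdot>\<^sub>m \<Phi> A"
  using assms unfolding lin_map_def by auto

lemma lin_map_eq_on_mat_units:
  assumes \<Phi>: "lin_map n k \<Phi>" and \<Psi>: "lin_map n k \<Psi>"
    and units: "\<And>a b. a < n \<Longrightarrow> b < n \<Longrightarrow> \<Phi> (mat_unit n a b) = \<Psi> (mat_unit n a b)"
    and \<rho>: "\<rho> \<in> carrier_mat n n"
  shows "\<Phi> \<rho> = \<Psi> \<rho>"
proof (rule eq_matI)
  fix i j assume "i < dim_row (\<Psi> \<rho>)" "j < dim_col (\<Psi> \<rho>)"
  hence ij: "i < k" "j < k" using lin_mapD(1)[OF \<Psi> \<rho>] by auto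
  have "\<Phi> \<rho> $$ (i, j) - \<Psi> \<rho> $$ (i, j) = 0"
  proof (rule linear_functional_vanishes[where \<psi> = "\<lambda>A. \<Phi> A $$ (i, j) - \<Psi> A $$ (i, j)"])
    fix A B :: "complex mat" assume "A \<in> carrier_mat n n" "B \<in> carrier_mat n n"
    with lin_mapD[OF \<Phi>] lin_mapD[OF \<Psi>] ij
    show "\<Phi> (A + B) $$ (i, j) - \<Psi> (A + B) $$ (i, j)
        = \<Phi> A $$ (i, j) - \<Psi> A $$ (i, j) + (\<Phi> B $$ (i, j) - \<Psi> B $$ (i, j))"
      by (metis (no_types, lifting) add_diff_add carrier_matD index_add_mat(1))
  next
    fix A :: "complex mat" and c assume A: "A \<in> carrier_mat n n"
    with lin_mapD(1)[OF \<Phi>] lin_mapD(1)[OF \<Psi>] have "\<Phi> A \<in> carrier_mat k k" "\<Psi> A \<in> carrier_mat k k"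
      by auto
    with A lin_mapD(3)[OF \<Phi>] lin_mapD(3)[OF \<Psi>] ij
    show "\<Phi> (c \<cdot>\<^sub>m A) $$ (i, j) - \<Psi> (c \<cdot>\<^sub>m A) $$ (i, j) = c * (\<Phi> A $$ (i, j) - \<Psi> A $$ (i, j))"
      by (simp add: algebra_simps)
  qed (use units \<rho> in auto)
  then show "\<Phi> \<rho> $$ (i, j) = \<Psi> \<rho> $$ (i, j)" by simp
qed (use lin_mapD(1)[OF \<Phi> \<rho>] lin_mapD(1)[OF \<Psi> \<rho>] in auto)

lemma lin_map_zero:
  assumes "lin_map n k \<Phi>"
  shows "\<Phi> (0\<^sub>m n n) = 0\<^sub>m k k"
proof -
  have "\<Phi> (0\<^sub>m n n) = \<Phi> (0 \<cdot>\<^sub>m 0\<^sub>m n n)" by (metis smult_zero_mat zero_carrier_mat)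
  also have "\<dots> = 0 \<cdot>\<^sub>m \<Phi> (0\<^sub>m n n)" using lin_mapD(3)[OF assms] zero_carrier_mat by blast
  also have "\<dots> = 0\<^sub>m k k" using lin_mapD(1)[OF assms, of "0\<^sub>m n n"] by auto
  finally show ?thesis .
qed

lemma lin_map_comp:
  assumes "lin_map n m I" "lin_map m k J"
  shows "lin_map n k (\<lambda>\<rho>. J (I \<rho>))"
  using lin_mapD[OF assms(1)] lin_mapD[OF assms(2)] unfolding lin_map_def by auto

lemma lin_map_sandwich:
  assumes "C \<in> carrier_mat n n"
  shows "lin_map n n (\<lambda>\<rho>. C * \<rho> * C)"
  unfolding lin_map_def
proof (intro conjI ballI allI)
  fix \<rho> :: "complex mat" assume "\<rho> \<in> carrier_mat n n"
  thus "C * \<rho> * C \<in> carrier_mat n n" using assms by auto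
next
  fix \<rho> \<sigma> :: "complex mat" assume r: "\<rho> \<in> carrier_mat n n" "\<sigma> \<in> carrier_mat n n"
  have "C * (\<rho> + \<sigma>) = C * \<rho> + C * \<sigma>" by (rule mult_add_distrib_mat[OF assms r])
  moreover have "(C * \<rho> + C * \<sigma>) * C = C * \<rho> * C + C * \<sigma> * C"
    by (rule add_mult_distrib_mat[of _ n n]) (use r assms in auto)
  ultimately show "C * (\<rho> + \<sigma>) * C = C * \<rho> * C + C * \<sigma> * C" by simp
next
  fix \<rho> :: "complex mat" and c assume r: "\<rho> \<in> carrier_mat n n"
  have "C * (c \<cdot>\<^sub>m \<rho>) = c \<cdot>\<^sub>m (C * \<rho>)" by (rule mult_smult_distrib[OF assms r])
  moreover have "(c \<cdot>\<^sub>m (C * \<rho>)) * C = c \<cdot>\<^sub>m (C * \<rho> * C)"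
    by (rule mult_smult_assoc_mat[of _ n n]) (use r assms in auto)
  ultimately show "C * (c \<cdot>\<^sub>m \<rho>) * C = c \<cdot>\<^sub>m (C * \<rho> * C)" by simp
qed

lemma mtrace_add:
  "A \<in> carrier_mat n n \<Longrightarrow> B \<in> carrier_mat n n \<Longrightarrow> mtrace (A + B) = mtrace A + mtrace B"
  by (simp add: mtrace_def sum.distrib)

lemma mtrace_smult: "A \<in> carrier_mat n n \<Longrightarrow> mtrace (c \<cdot>\<^sub>m A) = c * mtrace A"
  unfolding mtrace_def by (auto simp: sum_distrib_left intro!: sum.cong)

lemma mtrace_mult_comm:
  assumes "A \<in> carrier_mat n m" "B \<in> carrier_mat m n"
  shows "mtrace (A * B) = mtrace (B * A)"
proof -
  have "mtrace (A * B) = (\<Sum>i<n. \<Sum>k<m. A $$ (i, k) * B $$ (k, i))"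
    unfolding mtrace_def using assms by (auto intro!: sum.cong simp: scalar_prod_def lessThan_atLeast0)
  also have "\<dots> = (\<Sum>k<m. \<Sum>i<n. B $$ (k, i) * A $$ (i, k))"
    by (subst sum.swap) (simp add: mult.commute)
  also have "\<dots> = mtrace (B * A)"
    unfolding mtrace_def using assms by (auto intro!: sum.cong simp: scalar_prod_def lessThan_atLeast0)
  finally show ?thesis .
qed

lemma mtrace_mult_outer:
  assumes "M \<in> carrier_mat n n"
  shows "mtrace (M * outer n u w) = sesq n M w u"
  unfolding mtrace_def sesq_def using assms
  by (auto simp: scalar_prod_def lessThan_atLeast0 outer_def sum_distrib_left mult.commute
                 mult.left_commute intro!: sum.cong)

lemma mtrace_mult_mat_unit:
  assumes "X \<in> carrier_mat n n" "a < n" "b < n"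
  shows "mtrace (X * mat_unit n a b) = X $$ (b, a)"
  using mtrace_mult_outer[OF assms(1)] sesq_unit_fun[OF assms(3,2)] by (simp add: mat_unit_def)

lemma eq_mat_by_trace_pairing:
  assumes "X \<in> carrier_mat n n" "Y \<in> carrier_mat n n"
    and "\<And>\<rho>. \<rho> \<in> carrier_mat n n \<Longrightarrow> mtrace (X * \<rho>) = mtrace (Y * \<rho>)"
  shows "X = Y"
proof (rule eq_matI)
  fix i j assume "i < dim_row Y" "j < dim_col Y"
  hence ij: "i < n" "j < n" using assms by auto
  have "mtrace (X * mat_unit n j i) = mtrace (Y * mat_unit n j i)" using assms(3) by simp
  thus "X $$ (i, j) = Y $$ (i, j)" using mtrace_mult_mat_unit assms ij by metis
qed (use assms in auto)

lemma lin_map_trace_representable: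
  assumes "lin_map n k \<Phi>"
  shows "\<exists>B\<in>carrier_mat n n. \<forall>\<rho>\<in>carrier_mat n n. mtrace (B * \<rho>) = mtrace (\<Phi> \<rho>)"
proof -
  define B where "B = mat n n (\<lambda>(i, j). mtrace (\<Phi> (mat_unit n j i)))"
  have B: "B \<in> carrier_mat n n" by (simp add: B_def)
  have "mtrace (B * \<rho>) - mtrace (\<Phi> \<rho>) = 0" if "\<rho> \<in> carrier_mat n n" for \<rho>
  proof (rule linear_functional_vanishes[where \<psi> = "\<lambda>\<rho>. mtrace (B * \<rho>) - mtrace (\<Phi> \<rho>)", OF _ _ _ that])
    fix A C :: "complex mat" assume "A \<in> carrier_mat n n" "C \<in> carrier_mat n n"
    then show "mtrace (B * (A + C)) - mtrace (\<Phi> (A + C))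
        = mtrace (B * A) - mtrace (\<Phi> A) + (mtrace (B * C) - mtrace (\<Phi> C))"
      using B lin_mapD[OF assms]
      by (simp add: mult_add_distrib_mat mtrace_add[where n=n] mtrace_add[where n=k])
  next
    fix A :: "complex mat" and c assume "A \<in> carrier_mat n n"
    then show "mtrace (B * (c \<cdot>\<^sub>m A)) - mtrace (\<Phi> (c \<cdot>\<^sub>m A)) = c * (mtrace (B * A) - mtrace (\<Phi> A))"
      using B lin_mapD[OF assms]
      by (simp add: mult_smult_distrib mtrace_smult[where n=n] mtrace_smult[where n=k] algebra_simps)
  qed (use B in \<open>simp add: mtrace_mult_mat_unit B_def\<close>)
  then show ?thesis using B by auto
qed

lemma msum_carrier[simp]: "msum r c f S \<in> carrier_mat r c"
  and msum_dims[simp]: "dim_row (msum r c f S) = r" "dim_col (msum r c f S) = c"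
  by (simp_all add: msum_def)

lemma msum_empty: "msum r c f {} = 0\<^sub>m r c"
  by (auto simp: msum_def)

lemma msum_insert:
  assumes "finite S" "a \<notin> S" "f a \<in> carrier_mat r c"
  shows "msum r c f (insert a S) = f a + msum r c f S"
  by (rule eq_matI) (use assms in \<open>auto simp: msum_def\<close>)

lemma msum_cong: "(\<And>s. s \<in> S \<Longrightarrow> f s = g s) \<Longrightarrow> msum r c f S = msum r c g S"
  unfolding msum_def by (intro arg_cong[where f="mat r c"] ext) (auto intro!: sum.cong)

lemma msum_delta:
  assumes "finite S" "a \<in> S" "M \<in> carrier_mat r c"
  shows "msum r c (\<lambda>s. if s = a then M else 0\<^sub>m r c) S = M"
  by (rule eq_matI) (use assms in \<open>auto simp: msum_def if_distrib[of "\<lambda>X. X $$ _"] cong: if_cong\<close>)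

lemma mtrace_msum:
  assumes "\<And>s. s \<in> S \<Longrightarrow> f s \<in> carrier_mat k k"
  shows "mtrace (msum k k f S) = (\<Sum>s\<in>S. mtrace (f s))"
proof -
  have "mtrace (msum k k f S) = (\<Sum>s\<in>S. \<Sum>i<k. f s $$ (i, i))"
    by (simp add: mtrace_def msum_def sum.swap[of _ "{..<k}"])
  also have "\<dots> = (\<Sum>s\<in>S. mtrace (f s))"
    using assms by (intro sum.cong refl) (metis carrier_matD(1) mtrace_def)
  finally show ?thesis .
qed

lemma lin_map_msum:
  assumes "lin_map n k \<Phi>" "finite S" "\<And>s. s \<in> S \<Longrightarrow> f s \<in> carrier_mat n n"
  shows "\<Phi> (msum n n f S) = msum k k (\<lambda>s. \<Phi> (f s)) S"
  using assms(2,3)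
proof (induction S rule: finite_induct)
  case empty
  then show ?case by (simp add: msum_empty lin_map_zero[OF assms(1)])
next
  case (insert a S)
  have "\<Phi> (msum n n f (insert a S)) = \<Phi> (f a) + \<Phi> (msum n n f S)"
    using insert lin_mapD(2)[OF assms(1)] by (simp add: msum_insert)
  also have "\<dots> = msum k k (\<lambda>s. \<Phi> (f s)) (insert a S)"
    using insert lin_mapD(1)[OF assms(1)] by (simp add: msum_insert)
  finally show ?case .
qed

lemma mult_msum:
  assumes "C \<in> carrier_mat m n" "D \<in> carrier_mat n p" "finite S"
    and "\<And>s. s \<in> S \<Longrightarrow> f s \<in> carrier_mat n n"
  shows "C * msum n n f S * D = msum m p (\<lambda>s. C * f s * D) S"
  using assms(3,4)
proof (induction S rule: finite_induct)
  case empty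
  then show ?case using assms(1,2) by (simp add: msum_empty)
next
  case (insert a S)
  have "C * msum n n f (insert a S) * D = C * (f a + msum n n f S) * D"
    using insert by (simp add: msum_insert)
  also have "\<dots> = C * f a * D + C * msum n n f S * D"
    using insert assms(1,2)
    by (simp add: mult_add_distrib_mat[where nr=m and n=n and nc=n]
                  add_mult_distrib_mat[where nr=m and n=n and nc=p])
  also have "\<dots> = msum m p (\<lambda>s. C * f s * D) (insert a S)"
  proof -
    have "C * f a * D \<in> carrier_mat m p" using insert.prems assms(1,2) by auto
    then show ?thesis using insert by (simp add: msum_insert)
  qed
  finally show ?case .
qed

lemma mtrace_msum_mult:
  assumes "\<rho> \<in> carrier_mat n n" "finite S" "\<And>s. s \<in> S \<Longrightarrow> f s \<in> carrier_mat n n"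
  shows "mtrace (msum n n f S * \<rho>) = (\<Sum>s\<in>S. mtrace (f s * \<rho>))"
proof -
  have "msum n n f S * \<rho> = 1\<^sub>m n * msum n n f S * \<rho>" by simp
  also have "\<dots> = msum n n (\<lambda>s. 1\<^sub>m n * f s * \<rho>) S"
    using assms by (intro mult_msum) auto
  also have "\<dots> = msum n n (\<lambda>s. f s * \<rho>) S"
    using assms(3) by (intro msum_cong) (metis left_mult_one_mat)
  moreover have "\<And>s. s \<in> S \<Longrightarrow> f s * \<rho> \<in> carrier_mat n n"
    using assms(1,3) by (metis mult_carrier_mat)
  ultimately show ?thesis by (simp add: mtrace_msum)
qed

subsection \<open>Ampliations and complete positivity\<close>

lemma block_index_div_mod: "a < (n::nat) \<Longrightarrow> (p * n + a) div n = p \<and> (p * n + a) mod n = a"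
  by auto

lemma block_index_bound: "p < (r::nat) \<Longrightarrow> a < n \<Longrightarrow> p * n + a < r * n"
proof -
  assume "p < r" "a < n"
  hence "p * n + a < Suc p * n" by simp
  also have "\<dots> \<le> r * n" using \<open>p < r\<close> by (intro mult_le_mono1) simp
  finally show ?thesis .
qed

lemma ampl_carrier[simp]:
  "dim_row (ampl r n k \<Phi> X) = r * k" "dim_col (ampl r n k \<Phi> X) = r * k"
  "ampl r n k \<Phi> X \<in> carrier_mat (r * k) (r * k)"
  by (simp_all add: ampl_def)

lemma ampl_1:
  assumes "\<rho> \<in> carrier_mat n n" "\<Phi> \<rho> \<in> carrier_mat k k"
  shows "ampl 1 n k \<Phi> \<rho> = \<Phi> \<rho>"
proof -
  have "mat n n (($$) \<rho>) = \<rho>" using assms(1) by (intro eq_matI) auto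
  then show ?thesis by (intro eq_matI) (use assms in \<open>auto simp: ampl_def\<close>)
qed

lemma completely_positive_psd:
  assumes "completely_positive n k \<Phi>" "lin_map n k \<Phi>" "psd n \<rho>"
  shows "psd k (\<Phi> \<rho>)"
proof -
  have r: "\<rho> \<in> carrier_mat n n" using assms(3) psd_def by auto
  have "psd (1 * k) (ampl 1 n k \<Phi> \<rho>)"
    using assms(1,3) unfolding completely_positive_def by (metis mult_1)
  thus ?thesis using ampl_1[where \<Phi> = \<Phi>, OF r lin_mapD(1)[OF assms(2) r]] by simp
qed

lemma ampl_comp:
  assumes "lin_map n m I"
  shows "ampl r n d (\<lambda>\<rho>. J (I \<rho>)) X = ampl r m d J (ampl r n m I X)"
proof (rule eq_matI)
  fix i j assume "i < dim_row (ampl r m d J (ampl r n m I X))" "j < dim_col (ampl r m d J (ampl r n m I X))"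
  hence ij: "i < r * d" "j < r * d" by simp_all
  hence pq: "i div d < r" "j div d < r" by (simp_all add: less_mult_imp_div_less)
  define block where "block = mat n n (\<lambda>(a, b). X $$ ((i div d) * n + a, (j div d) * n + b))"
  have "block \<in> carrier_mat n n" by (simp add: block_def)
  hence Ib: "I block \<in> carrier_mat m m" using lin_mapD(1)[OF assms] by blast
  have "mat m m (\<lambda>(a, b). ampl r n m I X $$ ((i div d) * m + a, (j div d) * m + b)) = I block"
    by (rule eq_matI)
       (use Ib pq in \<open>auto simp: ampl_def block_index_div_mod block_index_bound block_def\<close>)
  then show "ampl r n d (\<lambda>\<rho>. J (I \<rho>)) X $$ (i, j) = ampl r m d J (ampl r n m I X) $$ (i, j)"
    using ij by (simp add: ampl_def[of r m d J] ampl_def[of r n d] block_def)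
qed simp_all

lemma completely_positive_comp:
  assumes "lin_map n m I" "completely_positive n m I" "completely_positive m k J"
  shows "completely_positive n k (\<lambda>\<rho>. J (I \<rho>))"
  using assms(2,3) unfolding completely_positive_def ampl_comp[OF assms(1)] by blast

lemma block_diag_carrier[simp]: "block_diag r n A \<in> carrier_mat (r * n) (r * n)"
  and block_diag_dims[simp]: "dim_row (block_diag r n A) = r * n" "dim_col (block_diag r n A) = r * n"
  by (simp_all add: block_diag_def)

lemma block_diag_hermitian:
  assumes "hermitian n A"
  shows "hermitian (r * n) (block_diag r n A)"
  unfolding hermitian_def
proof (intro allI impI)
  fix i j assume ij: "i < r * n" "j < r * n"
  hence "n > 0" by (cases n) auto
  with ij hermitianD[OF assms] show "block_diag r n A $$ (j, i) = cnj (block_diag r n A $$ (i, j))"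
    by (auto simp: block_diag_def)
qed

lemma sum_block:
  fixes p r n :: nat
  assumes "p < r"
  shows "(\<Sum>k<r * n. if k div n = p then F k else 0) = (\<Sum>a<n. F (p * n + a))"
proof -
  have "(\<Sum>k<r * n. if k div n = p then F k else 0) = (\<Sum>k\<in>{k\<in>{..<r * n}. k div n = p}. F k)"
    by (rule sum.inter_filter[symmetric]) simp
  also have "{k\<in>{..<r * n}. k div n = p} = (\<lambda>a. p * n + a) ` {..<n}"
  proof -
    have "k \<in> (\<lambda>a. p * n + a) ` {..<n}" if k: "k < r * n" "k div n = p" for k
    proof -
      have "n > 0" using k by (cases n) auto
      hence "k = p * n + k mod n" "k mod n < n" using k by (auto simp: mult.commute)
      thus ?thesis by (metis image_eqI lessThan_iff)
    qed
    moreover have "k < r * n \<and> k div n = p" if "k \<in> (\<lambda>a. p * n + a) ` {..<n}" for k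
      using that assms block_index_bound block_index_div_mod by auto
    ultimately show ?thesis by blast
  qed
  also have "(\<Sum>k\<in>(\<lambda>a. p * n + a) ` {..<n}. F k) = (\<Sum>a<n. F (p * n + a))"
    by (rule sum.reindex_cong[where l="\<lambda>a. p * n + a"]) (auto simp: inj_on_def)
  finally show ?thesis .
qed

lemma block_diag_mult_index:
  assumes "X \<in> carrier_mat (r * n) c" "i < r * n" "l < c"
  shows "(block_diag r n A * X) $$ (i, l) = (\<Sum>a<n. A $$ (i mod n, a) * X $$ ((i div n) * n + a, l))"
proof -
  have "(block_diag r n A * X) $$ (i, l) = (\<Sum>k<r * n. block_diag r n A $$ (i, k) * X $$ (k, l))"
    using assms by (intro index_mult_mat_sum) auto
  also have "\<dots> = (\<Sum>k<r * n. if k div n = i div n then A $$ (i mod n, k mod n) * X $$ (k, l) else 0)"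
    using assms by (intro sum.cong refl) (auto simp: block_diag_def)
  also have "\<dots> = (\<Sum>a<n. A $$ (i mod n, a) * X $$ ((i div n) * n + a, l))"
    using assms by (simp add: sum_block less_mult_imp_div_less block_index_div_mod)
  finally show ?thesis .
qed

lemma mult_block_diag_index:
  assumes "Y \<in> carrier_mat c (r * n)" "l < c" "j < r * n"
  shows "(Y * block_diag r n A) $$ (l, j) = (\<Sum>b<n. Y $$ (l, (j div n) * n + b) * A $$ (b, j mod n))"
proof -
  have "(Y * block_diag r n A) $$ (l, j) = (\<Sum>k<r * n. Y $$ (l, k) * block_diag r n A $$ (k, j))"
    using assms by (intro index_mult_mat_sum) auto
  also have "\<dots> = (\<Sum>k<r * n. if k div n = j div n then Y $$ (l, k) * A $$ (k mod n, j mod n) else 0)"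
    using assms by (intro sum.cong refl) (auto simp: block_diag_def)
  also have "\<dots> = (\<Sum>b<n. Y $$ (l, (j div n) * n + b) * A $$ (b, j mod n))"
    using assms by (simp add: sum_block less_mult_imp_div_less block_index_div_mod)
  finally show ?thesis .
qed

lemma ampl_sandwich:
  assumes A: "A \<in> carrier_mat n n" and X: "X \<in> carrier_mat (r * n) (r * n)"
  shows "ampl r n n (\<lambda>\<rho>. A * \<rho> * A) X = block_diag r n A * X * block_diag r n A"
proof (rule eq_matI)
  fix i j assume "i < dim_row (block_diag r n A * X * block_diag r n A)"
    "j < dim_col (block_diag r n A * X * block_diag r n A)"
  hence ij: "i < r * n" "j < r * n" by simp_all
  hence "n > 0" by (cases n) auto
  hence st: "i mod n < n" "j mod n < n" by simp_all
  define block where "block = mat n n (\<lambda>(a, b). X $$ ((i div n) * n + a, (j div n) * n + b))"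
  have "ampl r n n (\<lambda>\<rho>. A * \<rho> * A) X $$ (i, j) = (A * block * A) $$ (i mod n, j mod n)"
    using ij by (simp add: ampl_def block_def)
  also have "\<dots> = (\<Sum>b<n. (\<Sum>a<n. A $$ (i mod n, a) * block $$ (a, b)) * A $$ (b, j mod n))"
    by (rule index_mult3_mat_sum[OF A _ A st]) (simp add: block_def)
  also have "\<dots> = (\<Sum>b<n. (block_diag r n A * X) $$ (i, (j div n) * n + b) * A $$ (b, j mod n))"
  proof (intro sum.cong refl)
    fix b assume "b \<in> {..<n}"
    then have "(j div n) * n + b < r * n" using ij by (simp add: block_index_bound less_mult_imp_div_less)
    then show "(\<Sum>a<n. A $$ (i mod n, a) * block $$ (a, b)) * A $$ (b, j mod n)
        = (block_diag r n A * X) $$ (i, (j div n) * n + b) * A $$ (b, j mod n)"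
      using \<open>b \<in> {..<n}\<close> by (simp add: block_diag_mult_index[OF X ij(1)] block_def)
  qed
  also have "\<dots> = (block_diag r n A * X * block_diag r n A) $$ (i, j)"
    by (rule mult_block_diag_index[symmetric]) (use ij X in auto)
  finally show "ampl r n n (\<lambda>\<rho>. A * \<rho> * A) X $$ (i, j) = (block_diag r n A * X * block_diag r n A) $$ (i, j)" .
qed simp_all

lemma completely_positive_sandwich:
  assumes "A \<in> carrier_mat n n" "hermitian n A"
  shows "completely_positive n n (\<lambda>\<rho>. A * \<rho> * A)"
  unfolding completely_positive_def
proof (intro allI impI)
  fix r X assume X: "psd (r * n) X"
  hence "X \<in> carrier_mat (r * n) (r * n)" using psd_def by auto
  then show "psd (r * n) (ampl r n n (\<lambda>\<rho>. A * \<rho> * A) X)"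
    using ampl_sandwich[OF assms(1)] psd_sandwich[OF X block_diag_carrier block_diag_hermitian[OF assms(2)]]
    by simp
qed

lemma instrumentD:
  assumes "is_instrument n k I"
  shows "lin_map n k (I x)" "completely_positive n k (I x)" "trace_nonincreasing n (I x)"
    "trace_preserving n (chan k I)"
  using assms unfolding is_instrument_def by auto

lemma instrument_psd:
  assumes "is_instrument n k I" "psd n \<rho>"
  shows "psd k (I x \<rho>)"
  using completely_positive_psd instrumentD(1,2) assms by blast

lemma instrument_trace_sum:
  assumes "is_instrument n k I" "\<rho> \<in> carrier_mat n n"
  shows "(\<Sum>x\<in>UNIV. mtrace (I x \<rho>)) = mtrace \<rho>"
proof -
  have "mtrace (chan k I \<rho>) = (\<Sum>x\<in>UNIV. mtrace (I x \<rho>))"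
    unfolding chan_def using lin_mapD(1)[OF instrumentD(1)[OF assms(1)] assms(2)]
    by (intro mtrace_msum) auto
  moreover have "mtrace (chan k I \<rho>) = mtrace \<rho>"
    using instrumentD(4)[OF assms(1)] assms(2) unfolding trace_preserving_def by auto
  ultimately show ?thesis by simp
qed

lemma povmD:
  assumes "is_povm n A"
  shows "psd n (A x)" "A x \<in> carrier_mat n n" "hermitian n (A x)" "msum n n A UNIV = 1\<^sub>m n"
  using assms psd_hermitian unfolding is_povm_def psd_def by auto

lemma povm_trace_sum:
  assumes "is_povm n A" "\<rho> \<in> carrier_mat n n"
  shows "(\<Sum>x\<in>UNIV. mtrace (A x * \<rho>)) = mtrace \<rho>"
  using mtrace_msum_mult[OF assms(2), of UNIV A] povmD(2,4)[OF assms(1)] assms(2) by simp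

lemma induced_povm_exists:
  assumes "is_instrument n k I"
  shows "\<exists>B. induced_povm n I B"
proof -
  have "\<forall>x. \<exists>B. B \<in> carrier_mat n n \<and> (\<forall>\<rho>\<in>carrier_mat n n. mtrace (B * \<rho>) = mtrace (I x \<rho>))"
    using lin_map_trace_representable[OF instrumentD(1)[OF assms]] by blast
  then show ?thesis unfolding induced_povm_def by (rule choice)
qed

lemma instrument_sequential:
  fixes I :: "'x::finite \<Rightarrow> complex mat \<Rightarrow> complex mat"
    and J :: "'y::finite \<Rightarrow> complex mat \<Rightarrow> complex mat"
  assumes I: "is_instrument n m I" and J: "is_instrument m k J"
  shows "is_instrument n k (\<lambda>(x, y) \<rho>. J y (I x \<rho>))"
  unfolding is_instrument_def
proof (intro conjI allI)
  fix p :: "'x \<times> 'y"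
  obtain x y where p: "p = (x, y)" by force
  show "lin_map n k ((\<lambda>(x, y) \<rho>. J y (I x \<rho>)) p)"
    unfolding p using lin_map_comp[OF instrumentD(1)[OF I] instrumentD(1)[OF J]] by simp
  show "completely_positive n k ((\<lambda>(x, y) \<rho>. J y (I x \<rho>)) p)"
    unfolding p
    using completely_positive_comp[OF instrumentD(1)[OF I] instrumentD(2)[OF I] instrumentD(2)[OF J]]
    by simp
  show "trace_nonincreasing n ((\<lambda>(x, y) \<rho>. J y (I x \<rho>)) p)"
    unfolding p trace_nonincreasing_def
  proof (clarsimp)
    fix \<rho> assume "psd n \<rho>"
    then have "Re (mtrace (J y (I x \<rho>))) \<le> Re (mtrace (I x \<rho>))"
      using instrumentD(3)[OF J] instrument_psd[OF I] unfolding trace_nonincreasing_def by blast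
    also have "\<dots> \<le> Re (mtrace \<rho>)"
      using instrumentD(3)[OF I] \<open>psd n \<rho>\<close> unfolding trace_nonincreasing_def by blast
    finally show "Re (mtrace (J y (I x \<rho>))) \<le> Re (mtrace \<rho>)" .
  qed
next
  show "trace_preserving n (chan k (\<lambda>(x, y) \<rho>. J y (I x \<rho>)))"
    unfolding trace_preserving_def
  proof
    fix \<rho> :: "complex mat" assume \<rho>: "\<rho> \<in> carrier_mat n n"
    have I\<rho>: "I x \<rho> \<in> carrier_mat m m" for x using lin_mapD(1)[OF instrumentD(1)[OF I] \<rho>] .
    have "mtrace (chan k (\<lambda>(x, y) \<rho>. J y (I x \<rho>)) \<rho>) = (\<Sum>(x, y)\<in>UNIV. mtrace (J y (I x \<rho>)))"
      unfolding chan_def using lin_mapD(1)[OF instrumentD(1)[OF J] I\<rho>]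
      by (subst mtrace_msum) (auto simp: case_prod_beta')
    also have "\<dots> = (\<Sum>x\<in>UNIV. \<Sum>y\<in>UNIV. mtrace (J y (I x \<rho>)))"
      by (simp add: sum.cartesian_product[symmetric] UNIV_Times_UNIV[symmetric] del: UNIV_Times_UNIV)
    also have "\<dots> = mtrace \<rho>"
      using instrument_trace_sum[OF J I\<rho>] instrument_trace_sum[OF I \<rho>] by simp
    finally show "mtrace (chan k (\<lambda>(x, y) \<rho>. J y (I x \<rho>)) \<rho>) = mtrace \<rho>" .
  qed
qed

lemma povm_not_disturb_imp_compatible:
  fixes A :: "'x::finite \<Rightarrow> complex mat" and J :: "'y::finite \<Rightarrow> complex mat \<Rightarrow> complex mat"
  assumes J: "is_instrument n d J" and "povm_not_disturb n d A J"
  shows "compatible n d A J"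
proof -
  obtain I :: "'x \<Rightarrow> complex mat \<Rightarrow> complex mat" where
    I: "is_instrument n n I" and IA: "induced_povm n I A" and IJ: "ins_not_disturb n d I J"
    using assms(2) unfolding povm_not_disturb_def by blast
  define G :: "'x \<times> 'y \<Rightarrow> complex mat \<Rightarrow> complex mat" where "G = (\<lambda>(x, y) \<rho>. J y (I x \<rho>))"
  have G: "is_instrument n d G" unfolding G_def by (rule instrument_sequential[OF I J])
  then obtain B where GB: "induced_povm n G B" using induced_povm_exists by blast
  have I\<rho>: "I x \<rho> \<in> carrier_mat n n" if "\<rho> \<in> carrier_mat n n" for x \<rho>
    using lin_mapD(1)[OF instrumentD(1)[OF I] that] .
  have "msum d d (\<lambda>x. G (x, y) \<rho>) UNIV = J y \<rho>" if \<rho>: "\<rho> \<in> carrier_mat n n" for y \<rho>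
  proof -
    have "msum d d (\<lambda>x. G (x, y) \<rho>) UNIV = J y (chan n I \<rho>)"
      using lin_map_msum[OF instrumentD(1)[OF J], of UNIV "\<lambda>x. I x \<rho>"] I\<rho>[OF \<rho>]
      by (simp add: G_def chan_def)
    also have "\<dots> = J y \<rho>" using IJ \<rho> unfolding ins_not_disturb_def by blast
    finally show ?thesis .
  qed
  moreover have "msum n n (\<lambda>y. B (x, y)) UNIV = A x" for x
  proof (rule eq_mat_by_trace_pairing)
    fix \<rho> :: "complex mat" assume \<rho>: "\<rho> \<in> carrier_mat n n"
    have "mtrace (msum n n (\<lambda>y. B (x, y)) UNIV * \<rho>) = (\<Sum>y\<in>UNIV. mtrace (B (x, y) * \<rho>))"
      using GB \<rho> unfolding induced_povm_def by (intro mtrace_msum_mult) auto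
    also have "\<dots> = (\<Sum>y\<in>UNIV. mtrace (J y (I x \<rho>)))"
      using GB \<rho> unfolding induced_povm_def by (simp add: G_def)
    also have "\<dots> = mtrace (A x * \<rho>)"
      using instrument_trace_sum[OF J I\<rho>[OF \<rho>]] IA \<rho> unfolding induced_povm_def by simp
    finally show "mtrace (msum n n (\<lambda>y. B (x, y)) UNIV * \<rho>) = mtrace (A x * \<rho>)" .
  qed (use IA in \<open>auto simp: induced_povm_def\<close>)
  ultimately show ?thesis unfolding compatible_def using G GB by blast
qed

subsection \<open>Sharp POVMs and the Lueders instrument\<close>

lemma mtrace_sandwich_idempotent:
  assumes "A \<in> carrier_mat n n" "A * A = A" "\<rho> \<in> carrier_mat n n"
  shows "mtrace (A * \<rho> * A) = mtrace (A * \<rho>)"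
proof -
  have "mtrace (A * \<rho> * A) = mtrace (A * (A * \<rho>))"
    using assms by (intro mtrace_mult_comm[where n=n and m=n]) auto
  also have "A * (A * \<rho>) = A * A * \<rho>" using assms by (simp add: assoc_mult_mat[symmetric, of A n n A n \<rho> n])
  finally show ?thesis using assms(2) by simp
qed

lemma lueders_instrument:
  assumes P: "is_povm n A" and S: "sharp n A"
  shows "is_instrument n n (\<lambda>x \<rho>. A x * \<rho> * A x)" "induced_povm n (\<lambda>x \<rho>. A x * \<rho> * A x) A"
proof -
  note A = povmD[OF P]
  have tr: "mtrace (A x * \<rho> * A x) = mtrace (A x * \<rho>)" if "\<rho> \<in> carrier_mat n n" for x \<rho>
    using mtrace_sandwich_idempotent[OF A(2) _ that] S unfolding sharp_def by blast
  show "induced_povm n (\<lambda>x \<rho>. A x * \<rho> * A x) A"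
    unfolding induced_povm_def using A tr by simp
  show "is_instrument n n (\<lambda>x \<rho>. A x * \<rho> * A x)"
    unfolding is_instrument_def
  proof (intro conjI allI)
    fix x
    show "lin_map n n (\<lambda>\<rho>. A x * \<rho> * A x)" using lin_map_sandwich[OF A(2)] .
    show "completely_positive n n (\<lambda>\<rho>. A x * \<rho> * A x)"
      using completely_positive_sandwich[OF A(2,3)] .
    show "trace_nonincreasing n (\<lambda>\<rho>. A x * \<rho> * A x)"
      unfolding trace_nonincreasing_def
    proof (intro allI impI)
      fix \<rho> assume \<rho>: "psd n \<rho>"
      hence \<rho>c: "\<rho> \<in> carrier_mat n n" using psd_def by auto
      have nonneg: "0 \<le> Re (mtrace (A z * \<rho>))" for z
        using psd_trace_nonneg[OF psd_sandwich[OF \<rho> A(2,3)]] tr[OF \<rho>c] by simp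
      have "Re (mtrace (A x * \<rho> * A x)) = Re (mtrace (A x * \<rho>))" using tr[OF \<rho>c] by simp
      also have "\<dots> \<le> (\<Sum>z\<in>UNIV. Re (mtrace (A z * \<rho>)))"
        by (rule member_le_sum) (use nonneg in auto)
      also have "\<dots> = Re (mtrace \<rho>)" using povm_trace_sum[OF P \<rho>c] by (metis Re_sum)
      finally show "Re (mtrace (A x * \<rho> * A x)) \<le> Re (mtrace \<rho>)" .
    qed
  next
    show "trace_preserving n (chan n (\<lambda>x \<rho>. A x * \<rho> * A x))"
      unfolding trace_preserving_def chan_def
    proof
      fix \<rho> :: "complex mat" assume \<rho>: "\<rho> \<in> carrier_mat n n"
      have "A x * \<rho> * A x \<in> carrier_mat n n" for x using A(2)[of x] \<rho> by auto
      then show "mtrace (msum n n (\<lambda>x. A x * \<rho> * A x) UNIV) = mtrace \<rho>"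
        using tr[OF \<rho>] povm_trace_sum[OF P \<rho>] by (simp add: mtrace_msum)
    qed
  qed
qed

lemma sharp_povm_orthogonal:
  assumes P: "is_povm n A" and S: "sharp n A" and "x \<noteq> z"
  shows "A x * A z = 0\<^sub>m n n"
proof -
  note A = povmD[OF P]
  have idem: "A w * A w = A w" for w using S unfolding sharp_def by blast
  have psd_w: "psd n (A x * A w * A x)" for w using psd_sandwich[OF A(1,2,3)] .
  have "mtrace (A x) + (\<Sum>w\<in>UNIV - {x}. mtrace (A x * A w * A x))
      = (\<Sum>w\<in>UNIV. mtrace (A x * A w * A x))"
    using idem[of x] by (simp add: sum.remove[of UNIV x])
  also have "\<dots> = mtrace (msum n n (\<lambda>w. A x * A w * A x) UNIV)"
    using psd_w by (simp add: mtrace_msum psd_def)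
  also have "msum n n (\<lambda>w. A x * A w * A x) UNIV = A x * msum n n A UNIV * A x"
    using A(2) by (intro mult_msum[symmetric]) auto
  also have "\<dots> = A x"
    using A(2)[of x] A(4) idem[of x] by simp
  finally have "(\<Sum>w\<in>UNIV - {x}. Re (mtrace (A x * A w * A x))) = 0"
    by (metis Re_sum add_cancel_right_right zero_complex.simps(1))
  hence "Re (mtrace (A x * A z * A x)) = 0"
    using psd_trace_nonneg[OF psd_w] assms(3) by (subst (asm) sum_nonneg_eq_0_iff) auto
  hence "mtrace (A x * A z * A x) = 0"
    using psd_trace_nonneg[OF psd_w[of z]] by (simp add: complex_eq_iff)
  hence "A x * A z * A x = 0\<^sub>m n n" using psd_trace_zero_imp_zero[OF psd_w[of z]] by simp
  then show ?thesis using sandwich_zero_imp_mult_zero A(2,3) idem by blast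
qed

lemma lueders_channel_compress:
  assumes P: "is_povm n A" and S: "sharp n A" and \<rho>: "\<rho> \<in> carrier_mat n n"
  shows "A x * chan n (\<lambda>x \<rho>. A x * \<rho> * A x) \<rho> * A x = A x * \<rho> * A x"
proof -
  note A = povmD[OF P]
  have idem: "A w * A w = A w" for w using S unfolding sharp_def by blast
  have summand: "A x * (A w * \<rho> * A w) * A x = (if w = x then A x * \<rho> * A x else 0\<^sub>m n n)" for w
  proof -
    have "A x * (A w * \<rho> * A w) * A x = (A x * A w) * \<rho> * (A w * A x)"
      using A(2)[of x] A(2)[of w] \<rho> by (simp add: assoc_mult_mat[of _ n n _ n _ n] mult_carrier_mat)
    then show ?thesis
      using idem[of x] sharp_povm_orthogonal[OF P S] \<rho> by auto
  qed
  have "A x * chan n (\<lambda>x \<rho>. A x * \<rho> * A x) \<rho> * A x = msum n n (\<lambda>w. A x * (A w * \<rho> * A w) * A x) UNIV"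
  proof -
    have "A w * \<rho> * A w \<in> carrier_mat n n" for w using A(2)[of w] \<rho> by auto
    then show ?thesis unfolding chan_def using A(2) by (intro mult_msum) auto
  qed
  also have "\<dots> = A x * \<rho> * A x"
    unfolding summand using A(2)[of x] \<rho> by (intro msum_delta) auto
  finally show ?thesis .
qed

subsection \<open>Positive maps dominated by a projection\<close>

lemma positive_map_outer_cross_null:
  assumes L: "lin_map n d \<Phi>" and pos: "\<And>\<sigma>. psd n \<sigma> \<Longrightarrow> psd d (\<Phi> \<sigma>)"
    and null: "\<Phi> (outer n b b) = 0\<^sub>m d d"
  shows "\<Phi> (outer n a b) = 0\<^sub>m d d \<and> \<Phi> (outer n b a) = 0\<^sub>m d d"
proof -
  note Lc = lin_mapD(1)[OF L, OF outer_carrier]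
  have "sesq d (\<Phi> (outer n a b)) f f = 0 \<and> sesq d (\<Phi> (outer n b a)) f f = 0" for f
  proof (rule nonneg_perturbation_coeffs_zero, rule allI)
    fix t
    have "\<Phi> (outer n (\<lambda>i. a i + t * b i) (\<lambda>i. a i + t * b i))
        = \<Phi> (outer n a a) + cnj t \<cdot>\<^sub>m \<Phi> (outer n a b) + t \<cdot>\<^sub>m \<Phi> (outer n b a)"
      unfolding outer_expand using Lc null by (simp add: lin_mapD(2,3)[OF L])
    then have "sesq d (\<Phi> (outer n (\<lambda>i. a i + t * b i) (\<lambda>i. a i + t * b i))) f f
        = sesq d (\<Phi> (outer n a a)) f f + cnj t * sesq d (\<Phi> (outer n a b)) f f
          + t * sesq d (\<Phi> (outer n b a)) f f"
      using Lc by (simp add: sesq_add_mat[where n=d] sesq_smult_mat[where n=d])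
    then show "Im (sesq d (\<Phi> (outer n a a)) f f + cnj t * sesq d (\<Phi> (outer n a b)) f f
          + t * sesq d (\<Phi> (outer n b a)) f f) = 0 \<and>
        0 \<le> Re (sesq d (\<Phi> (outer n a a)) f f + cnj t * sesq d (\<Phi> (outer n a b)) f f
          + t * sesq d (\<Phi> (outer n b a)) f f)"
      using pos[OF outer_psd] unfolding psd_iff_sesq by metis
  qed
  then show ?thesis using sesq_zero_imp_zero Lc by metis
qed

lemma dominated_map_kernel_null:
  assumes L: "lin_map n d \<Phi>" and pos: "\<And>\<sigma>. psd n \<sigma> \<Longrightarrow> psd d (\<Phi> \<sigma>)"
    and dom: "\<And>\<sigma>. psd n \<sigma> \<Longrightarrow> Re (mtrace (\<Phi> \<sigma>)) \<le> Re (mtrace (P * \<sigma>))"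
    and P: "P \<in> carrier_mat n n" and ker: "\<And>i. i < n \<Longrightarrow> mat_apply n P b i = 0"
  shows "\<Phi> (outer n b b) = 0\<^sub>m d d"
proof -
  have "mtrace (P * outer n b b) = 0"
    using ker by (simp add: mtrace_mult_outer[OF P] sesq_mat_apply)
  hence "Re (mtrace (\<Phi> (outer n b b))) \<le> 0" using dom[OF outer_psd[of n b]] by simp
  with psd_trace_nonneg[OF pos[OF outer_psd[of n b]]] have "mtrace (\<Phi> (outer n b b)) = 0"
    by (simp add: complex_eq_iff)
  then show ?thesis using psd_trace_zero_imp_zero[OF pos[OF outer_psd[of n b]]] by simp
qed

lemma dominated_map_compress_mat_unit:
  assumes L: "lin_map n d \<Phi>" and pos: "\<And>\<sigma>. psd n \<sigma> \<Longrightarrow> psd d (\<Phi> \<sigma>)"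
    and dom: "\<And>\<sigma>. psd n \<sigma> \<Longrightarrow> Re (mtrace (\<Phi> \<sigma>)) \<le> Re (mtrace (P * \<sigma>))"
    and P: "P \<in> carrier_mat n n" "hermitian n P" "P * P = P"
    and ab: "a < n" "b < n"
  shows "\<Phi> (mat_unit n a b) = \<Phi> (P * mat_unit n a b * P)"
proof -
  define col where "col c = (\<lambda>i. P $$ (i, c))" for c
  define comp where "comp c = (\<lambda>i. unit_fun c i - P $$ (i, c))" for c
  have kernel: "\<Phi> (outer n (comp c) (comp c)) = 0\<^sub>m d d" if "c < n" for c
  proof (rule dominated_map_kernel_null[OF L pos dom P(1)])
    fix i assume i: "i < n"
    have "mat_apply n P (comp c) i = (\<Sum>k<n. P $$ (i, k) * unit_fun c k) - (P * P) $$ (i, c)"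
      unfolding mat_apply_def comp_def
      by (simp add: algebra_simps sum_subtractf index_mult_mat_sum[OF P(1) P(1) i that])
    also have "\<dots> = 0" using that P(3) by (simp add: unit_fun_def if_distrib sum.delta cong: if_cong)
    finally show "mat_apply n P (comp c) i = 0" .
  qed
  \<comment> \<open>E_ab = P E_ab P + (1 - P) E_ab + P E_ab (1 - P)\<close>
  have "mat_unit n a b = outer n (col a) (col b) + outer n (comp a) (unit_fun b) + outer n (col a) (comp b)"
    by (rule eq_matI) (auto simp: mat_unit_def outer_def col_def comp_def algebra_simps)
  hence "\<Phi> (mat_unit n a b) = \<Phi> (outer n (col a) (col b))"
    using positive_map_outer_cross_null[OF L pos kernel] ab lin_mapD[OF L]
    by (simp add: lin_mapD(2)[OF L])
  moreover have "P * mat_unit n a b * P = outer n (col a) (col b)"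
  proof (rule eq_matI)
    fix i j assume "i < dim_row (outer n (col a) (col b))" "j < dim_col (outer n (col a) (col b))"
    hence ij: "i < n" "j < n" by auto
    have "(P * mat_unit n a b * P) $$ (i, j)
        = (\<Sum>l<n. (\<Sum>k<n. P $$ (i, k) * mat_unit n a b $$ (k, l)) * P $$ (l, j))"
      by (rule index_mult3_mat_sum[OF P(1) mat_unit_carrier P(1) ij])
    also have "\<dots> = (\<Sum>l<n. (if l = b then P $$ (i, a) else 0) * P $$ (l, j))"
      using ab by (intro sum.cong refl) (simp add: mat_unit_index if_distrib[of "\<lambda>x. P $$ _ * x"] sum.delta cong: if_cong)
    also have "\<dots> = P $$ (i, a) * P $$ (b, j)"
      using ab by (simp add: if_distrib[of "\<lambda>x. x * _"] sum.delta cong: if_cong)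
    also have "\<dots> = outer n (col a) (col b) $$ (i, j)"
      using ij ab hermitianD[OF P(2), of j b] by (simp add: outer_def col_def)
    finally show "(P * mat_unit n a b * P) $$ (i, j) = outer n (col a) (col b) $$ (i, j)" .
  qed (use P in auto)
  ultimately show ?thesis by simp
qed

lemma dominated_map_compress:
  assumes L: "lin_map n d \<Phi>" and pos: "\<And>\<sigma>. psd n \<sigma> \<Longrightarrow> psd d (\<Phi> \<sigma>)"
    and dom: "\<And>\<sigma>. psd n \<sigma> \<Longrightarrow> Re (mtrace (\<Phi> \<sigma>)) \<le> Re (mtrace (P * \<sigma>))"
    and P: "P \<in> carrier_mat n n" "hermitian n P" "P * P = P"
    and \<rho>: "\<rho> \<in> carrier_mat n n"
  shows "\<Phi> \<rho> = \<Phi> (P * \<rho> * P)"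
  using lin_map_eq_on_mat_units[OF L lin_map_comp[OF lin_map_sandwich[OF P(1)] L]
      dominated_map_compress_mat_unit[OF L pos dom P] \<rho>] .

lemma compatible_marginal_dominated:
  fixes G :: "'x::finite \<times> 'y::finite \<Rightarrow> complex mat \<Rightarrow> complex mat"
  assumes G: "is_instrument n d G" and GB: "induced_povm n G B"
    and marginal: "msum n n (\<lambda>y. B (x, y)) UNIV = A x" and \<sigma>: "psd n \<sigma>"
  shows "Re (mtrace (G (x, y) \<sigma>)) \<le> Re (mtrace (A x * \<sigma>))"
proof -
  have \<sigma>c: "\<sigma> \<in> carrier_mat n n" using \<sigma> psd_def by auto
  have "mtrace (A x * \<sigma>) = (\<Sum>y'\<in>UNIV. mtrace (B (x, y') * \<sigma>))"
    using GB \<sigma>c unfolding marginal[symmetric] induced_povm_def by (intro mtrace_msum_mult) auto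
  also have "\<dots> = (\<Sum>y'\<in>UNIV. mtrace (G (x, y') \<sigma>))"
    using GB \<sigma>c unfolding induced_povm_def by simp
  finally have "Re (mtrace (A x * \<sigma>)) = (\<Sum>y'\<in>UNIV. Re (mtrace (G (x, y') \<sigma>)))" by simp
  moreover have "Re (mtrace (G (x, y) \<sigma>)) \<le> (\<Sum>y'\<in>UNIV. Re (mtrace (G (x, y') \<sigma>)))"
    by (rule member_le_sum) (use psd_trace_nonneg[OF instrument_psd[OF G \<sigma>]] in auto)
  ultimately show ?thesis by simp
qed

lemma sharp_compatible_imp_povm_not_disturb:
  fixes A :: "'x::finite \<Rightarrow> complex mat" and J :: "'y::finite \<Rightarrow> complex mat \<Rightarrow> complex mat"
  assumes P: "is_povm n A" and S: "sharp n A" and "compatible n d A J"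
  shows "povm_not_disturb n d A J"
proof -
  obtain G :: "'x \<times> 'y \<Rightarrow> complex mat \<Rightarrow> complex mat" and B where
    G: "is_instrument n d G" and GB: "induced_povm n G B"
    and GJ: "\<And>y \<rho>. \<rho> \<in> carrier_mat n n \<Longrightarrow> msum d d (\<lambda>x. G (x, y) \<rho>) UNIV = J y \<rho>"
    and BA: "\<And>x. msum n n (\<lambda>y. B (x, y)) UNIV = A x"
    using assms(3) unfolding compatible_def by blast
  define L where "L = (\<lambda>x \<rho>. A x * \<rho> * A x)"
  have idem: "A x * A x = A x" for x using S unfolding sharp_def by blast
  have compress: "G (x, y) \<rho> = G (x, y) (L x \<rho>)" if "\<rho> \<in> carrier_mat n n" for x y \<rho>
    unfolding L_def
    by (rule dominated_map_compress[OF instrumentD(1)[OF G] instrument_psd[OF G]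
          compatible_marginal_dominated[OF G GB BA] povmD(2,3)[OF P] idem that])
  have "J y (chan n L \<rho>) = J y \<rho>" if \<rho>: "\<rho> \<in> carrier_mat n n" for y \<rho>
  proof -
    have "chan n L \<rho> \<in> carrier_mat n n" by (simp add: chan_def)
    then have "J y (chan n L \<rho>) = msum d d (\<lambda>x. G (x, y) (L x (chan n L \<rho>))) UNIV"
      by (simp add: GJ[symmetric] compress cong: msum_cong)
    also have "\<dots> = msum d d (\<lambda>x. G (x, y) (L x \<rho>)) UNIV"
      using lueders_channel_compress[OF P S \<rho>] by (simp add: L_def)
    also have "\<dots> = J y \<rho>"
      using \<rho> by (simp add: GJ[symmetric] compress[symmetric] cong: msum_cong)
    finally show ?thesis .
  qed
  then show ?thesis
    unfolding povm_not_disturb_def ins_not_disturb_def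
    using lueders_instrument[OF P S] unfolding L_def by blast
qed

theorem proposition4:
  fixes n d :: nat
    and A :: "'x::finite \<Rightarrow> complex mat"
    and J :: "'y::finite \<Rightarrow> complex mat \<Rightarrow> complex mat"
  assumes "is_povm n A" and "is_instrument n d J"
  shows "(povm_not_disturb n d A J \<longrightarrow> compatible n d A J)
       \<and> (sharp n A \<longrightarrow> compatible n d A J \<longrightarrow> povm_not_disturb n d A J)"
  using povm_not_disturb_imp_compatible[OF assms(2)]
    sharp_compatible_imp_povm_not_disturb[OF assms(1)] by blast

end
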